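(* Let $a$ be a smooth, positive, increasing function on $(0,\infty)$ and consider the two-dimensional Robertson–Walker spacetime $ds^2=-dt^2+a^2(t)\,d\chi^2$, with comoving worldlines $\beta_0:\chi=0$, $\beta_1:\chi=\chi_1$, $\beta_2:\chi=\chi_2$. Suppose the events $\beta_0(t_0)$, $\beta_1(t_1)$, $\beta_2(t_2)$ lie on one null geodesic in the past-pointing horismos (past light cone) of $\beta_0(t_0)$. Let the optical coordinates of $\beta_1(t_1)$ and $\beta_2(t_2)$ relative to $\beta_0$ be $(t_0,\delta_1)$ and $(t_0,\delta_2)$, with $\delta_2>\delta_1>0$, and let $\delta_{21}$ be the affine distance coordinate of $\beta_2(t_2)$ in the optical coordinates of $\beta_1$. Then $$\delta_2=\delta_1+\frac{a(t_1)}{a(t_0)}\,\delta_{21}.$$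
   Context: Comoving worldlines $\chi=\text{const}$ are parametrized by $t$, their proper time. Optical coordinates $(\textsc{t},\delta)$ relative to a comoving observer $\beta_j$ ($\chi=\chi_j$): an event $(t,\chi)$ has $\textsc{t}$ equal to the proper time of $\beta_j$ at which the event lies on $\beta_j$'s past light cone, i.e. $\int_t^{\textsc{t}}du/a(u)=|\chi-\chi_j|$, and affine distance $\delta=\mathrm{sgn}(\chi-\chi_j)\int_t^{\textsc{t}}\frac{a(u)}{a(\textsc{t})}\,du$. *)

theory Defs
  imports "HOL-Analysis.Analysis"
begin

text \<open>Two-dimensional Robertson--Walker spacetime ds^2 = -dt^2 + a(t)^2 dchi^2,
  events are pairs (t, chi) with t > 0.  The comoving observer beta_j is the
  worldline chi = chi_j, parametrised by proper time t.\<close>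

text \<open>Optical coordinates (T, delta) of the event (t, chi) relative to the comoving
  observer chi = chi_j: T is the proper time of beta_j at which the event lies on the
  past light cone of beta_j, i.e. int_t^T du/a(u) = |chi - chi_j|, and
  delta = sgn(chi - chi_j) * int_t^T a(u)/a(T) du.\<close>
definition optical_coords ::
  "(real \<Rightarrow> real) \<Rightarrow> real \<Rightarrow> real \<Rightarrow> real \<Rightarrow> real \<Rightarrow> real \<Rightarrow> bool" where
  "optical_coords a chij t chi T delta \<longleftrightarrow>
     0 < t \<and> t \<le> T \<and>
     (LBINT u=t..T. 1 / a u) = \<bar>chi - chij\<bar> \<and>
     delta = sgn (chi - chij) * (LBINT u=t..T. a u / a T)"

definition on_past_null_geodesic ::
  "(real \<Rightarrow> real) \<Rightarrow> real \<Rightarrow> real \<Rightarrow> real \<Rightarrow> real \<Rightarrow> real \<Rightarrow> bool" where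
  "on_past_null_geodesic a t0 chi0 s t chi \<longleftrightarrow>
     0 < t \<and> t \<le> t0 \<and> chi = chi0 + s * (LBINT u=t..t0. 1 / a u)"

end

theory Submission
  imports Defs
begin

text \<open>All three distances are integrals of the scale factor along one null ray:
  delta2 a(t0) and delta1 a(t0) are the integrals of a over [t2, t0] and [t1, t0].
  Since conformal time (the integral of 1/a) is strictly increasing, the light signal
  from beta2(t2) reaches beta1 exactly at t1, so delta21 a(t1) is the integral of a
  over [t2, t1]. The claim is then additivity of the integral over [t2, t0].\<close>

lemma interval_lebesgue_integral_eq_integral_continuous:
  fixes f :: "real \<Rightarrow> real"
  assumes "continuous_on {x..y} f" "x \<le> y"
  shows "(LBINT u=x..y. f u) = integral {x..y} f"
  using interval_integral_eq_integral borel_integrable_atLeastAtMost' assms by blast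

definition conformal_time :: "(real \<Rightarrow> real) \<Rightarrow> real \<Rightarrow> real \<Rightarrow> real" where
  "conformal_time a x y = integral {x..y} (\<lambda>u. 1 / a u)"

locale positive_scale_factor =
  fixes a :: "real \<Rightarrow> real"
  assumes continuous: "continuous_on {0<..} a"
    and positive: "\<And>t. 0 < t \<Longrightarrow> 0 < a t"
begin

lemma continuous_on_Icc: "0 < x \<Longrightarrow> continuous_on {x..y} a"
  by (rule continuous_on_subset[OF continuous]) auto

lemma continuous_on_Icc_inverse: "0 < x \<Longrightarrow> continuous_on {x..y} (\<lambda>u. 1 / a u)"
  using continuous_on_Icc positive
  by (intro continuous_intros) (auto, metis less_le_trans less_irrefl)

lemma integral_nonneg: "0 < x \<Longrightarrow> 0 \<le> integral {x..y} a"
  using positive integrable_continuous_interval[OF continuous_on_Icc]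
  by (intro Henstock_Kurzweil_Integration.integral_nonneg) (auto intro: less_imp_le)

lemma conformal_time_pos: "0 < x \<Longrightarrow> x < y \<Longrightarrow> 0 < conformal_time a x y"
  unfolding conformal_time_def
  using integral_less_real[of x y "\<lambda>_. 0" "\<lambda>u. 1 / a u"] continuous_on_Icc_inverse positive
  by auto

lemma integral_combine:
  "0 < x \<Longrightarrow> x \<le> y \<Longrightarrow> y \<le> z \<Longrightarrow> integral {x..z} a = integral {x..y} a + integral {y..z} a"
  using Henstock_Kurzweil_Integration.integral_combine integrable_continuous_interval continuous_on_Icc
  by metis

lemma conformal_time_combine:
  "0 < x \<Longrightarrow> x \<le> y \<Longrightarrow> y \<le> z \<Longrightarrow> conformal_time a x z = conformal_time a x y + conformal_time a y z"
  unfolding conformal_time_def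
  using Henstock_Kurzweil_Integration.integral_combine integrable_continuous_interval
    continuous_on_Icc_inverse
  by metis

lemma integral_antimono_lower:
  assumes "0 < x" "x \<le> y" "y \<le> z"
  shows "integral {y..z} a \<le> integral {x..z} a"
  using integral_combine[OF assms] integral_nonneg[OF \<open>0 < x\<close>, of y] by linarith

lemma conformal_time_inj:
  assumes "0 < t" "t \<le> T" "t \<le> T'" "conformal_time a t T = conformal_time a t T'"
  shows "T = T'"
proof (rule ccontr)
  assume "T \<noteq> T'"
  then consider "T < T'" | "T' < T" by linarith
  then show False
  proof cases
    case 1
    then show False
      using conformal_time_combine[of t T T'] conformal_time_pos[of T T'] assms by auto
  next
    case 2
    then show False
      using conformal_time_combine[of t T' T] conformal_time_pos[of T' T] assms by auto
  qed
qed

lemma optical_coords_iff: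
  "optical_coords a chij t chi T delta \<longleftrightarrow>
     0 < t \<and> t \<le> T \<and> conformal_time a t T = \<bar>chi - chij\<bar> \<and>
     delta = sgn (chi - chij) * (integral {t..T} a / a T)"
proof -
  have "(LBINT u=t..T. 1 / a u) = conformal_time a t T"
    and "(LBINT u=t..T. a u / a T) = integral {t..T} a / a T" if "0 < t" "t \<le> T"
  proof -
    have "continuous_on {t..T} (\<lambda>u. a u / a T)"
      unfolding divide_inverse by (intro continuous_intros continuous_on_Icc \<open>0 < t\<close>)
    from interval_lebesgue_integral_eq_integral_continuous[OF this \<open>t \<le> T\<close>]
    show "(LBINT u=t..T. a u / a T) = integral {t..T} a / a T"
      by (simp only: integral_divide)
    show "(LBINT u=t..T. 1 / a u) = conformal_time a t T"
      using interval_lebesgue_integral_eq_integral_continuous continuous_on_Icc_inverse that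
      by (simp add: conformal_time_def)
  qed
  then show ?thesis
    unfolding optical_coords_def by auto
qed

lemma optical_coords_right:
  assumes "optical_coords a chij t chi T delta" "chij < chi"
  shows "delta = integral {t..T} a / a T"
  using assms by (simp add: optical_coords_iff)

lemma optical_coords_pos_imp_right:
  assumes "optical_coords a chij t chi T delta" "0 < delta"
  shows "chij < chi"
proof (rule ccontr)
  assume "\<not> chij < chi"
  then have "sgn (chi - chij) \<le> 0"
    by (simp add: sgn_if)
  moreover have "0 \<le> integral {t..T} a / a T"
    using assms(1) integral_nonneg positive[of T] by (auto simp: optical_coords_iff)
  ultimately have "delta \<le> 0"
    using assms(1) mult_nonpos_nonneg unfolding optical_coords_iff by blast
  with assms(2) show False by simp
qed

end

theorem lemma1:
  fixes a :: "real \<Rightarrow> real"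
    and t0 t1 t2 chi1 chi2 delta1 delta2 delta21 :: real
  assumes smooth: "\<forall>k. \<forall>x>0. ((deriv ^^ k) a) differentiable (at x)"
    and pos: "\<forall>x>0. a x > 0"
    and incr: "strict_mono_on {0<..} a"
    and t0_pos: "0 < t0"
    and geod: "\<exists>s\<in>{-1, 1}. on_past_null_geodesic a t0 0 s t1 chi1
                             \<and> on_past_null_geodesic a t0 0 s t2 chi2"
    and oc1: "optical_coords a 0 t1 chi1 t0 delta1"
    and oc2: "optical_coords a 0 t2 chi2 t0 delta2"
    and order: "delta2 > delta1" "delta1 > 0"
    and oc21: "\<exists>T. optical_coords a chi1 t2 chi2 T delta21"
  shows "delta2 = delta1 + a t1 / a t0 * delta21"
proof -
  interpret positive_scale_factor a
    using smooth pos
    by unfold_locales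
      (auto intro!: continuous_at_imp_continuous_on differentiable_imp_continuous_within
        dest: spec[of _ 0])
  have chi1: "0 < chi1" and chi2: "0 < chi2"
    using optical_coords_pos_imp_right oc1 oc2 order by fastforce+
  have t1: "0 < t1" "t1 \<le> t0" and t2: "0 < t2" "t2 \<le> t0"
    using oc1 oc2 by (auto simp: optical_coords_iff)
  have delta1: "delta1 = integral {t1..t0} a / a t0"
    and delta2: "delta2 = integral {t2..t0} a / a t0"
    using optical_coords_right oc1 oc2 chi1 chi2 by auto
  have "t2 < t1"
  proof (rule ccontr)
    assume "\<not> t2 < t1"
    then have "delta2 \<le> delta1"
      using integral_antimono_lower[of t1 t2 t0] t1 t2 positive[OF t0_pos]
      unfolding delta1 delta2 by (auto intro: divide_right_mono)
    with order show False by simp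
  qed
  have chi21: "chi2 - chi1 = conformal_time a t2 t1"
    using conformal_time_combine[of t2 t1 t0] oc1 oc2 chi1 chi2 \<open>t2 < t1\<close> t2
    by (auto simp: optical_coords_iff)
  then have "chi1 < chi2"
    using conformal_time_pos[OF t2(1) \<open>t2 < t1\<close>] by simp
  obtain T where oc21_T: "optical_coords a chi1 t2 chi2 T delta21"
    using oc21 by blast
  have "T = t1"
    using conformal_time_inj[of t2 T t1] oc21_T chi21 \<open>chi1 < chi2\<close> \<open>t2 < t1\<close>
    by (auto simp: optical_coords_iff)
  then have delta21: "delta21 = integral {t2..t1} a / a t1"
    using optical_coords_right[OF oc21_T \<open>chi1 < chi2\<close>] by simp
  show ?thesis
    using integral_combine[of t2 t1 t0] t1 t2 \<open>t2 < t1\<close> positive[OF t0_pos] positive[OF t1(1)]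
    unfolding delta1 delta2 delta21 by (simp add: field_simps)
qed

end
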